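(* Let $n\ge2$ and let $\mathcal{S}=\{\mathbf{s}\in\mathbb{R}^n:\tfrac12\mathbf{s}^TA\mathbf{s}+\mathbf{b}^T\mathbf{s}+c=0\}$, where $A$ is a nonzero real symmetric $n\times n$ matrix, $\mathbf{b}\in\mathbb{R}^n$, $c\in\mathbb{R}$. Suppose $\mathcal{S}$ does not contain a line but contains at least two points. Then $\operatorname{rk}(A\,|\,\mathbf{b})=n$, and $\mathcal{S}$ is a rationally parameterisable hypersurface up to an exceptional set of hypersurface measure zero, i.e. there are a map $\boldsymbol{\sigma}:\mathbb{R}^{n-1}\to\mathbb{R}^n$ with rational components and a set $D\subseteq\mathbb{R}^{n-1}$ on which they are defined such that $\{\boldsymbol{\sigma}(\mathbf{t}):\mathbf{t}\in D\}\subseteq\mathcal{S}$ and its complement in $\mathcal{S}$ has hypersurface measure zero.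
   Context: $(A\,|\,\mathbf{b})$ is the $n\times(n+1)$ matrix obtained by appending the column $\mathbf{b}$ to $A$. *)

theory Defs
  imports "HOL-Analysis.Analysis"
begin

text \<open>The extra column is indexed by None of the index type 'n option (which has n+1 elements);
  the position of the column does not affect the rank.\<close>
definition augment :: "real^'n^'m \<Rightarrow> real^'m \<Rightarrow> real^('n option)^'m" where
  "augment A b = (\<chi> i j. case j of None \<Rightarrow> b $ i | Some k \<Rightarrow> A $ i $ k)"

definition quadric :: "real^'n^'n \<Rightarrow> real^'n \<Rightarrow> real \<Rightarrow> (real^'n) set" where
  "quadric A b c = {s. (1/2) * (s \<bullet> (A *v s)) + b \<bullet> s + c = 0}"

definition contains_line :: "(real^'n) set \<Rightarrow> bool" where
  "contains_line S \<longleftrightarrow> (\<exists>x v. v \<noteq> 0 \<and> (\<forall>t::real. x + t *\<^sub>R v \<in> S))"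

definition poly_fun :: "(real^'m \<Rightarrow> real) \<Rightarrow> bool" where
  "poly_fun f \<longleftrightarrow> (\<exists>(M :: ('m \<Rightarrow> nat) set) (a :: ('m \<Rightarrow> nat) \<Rightarrow> real). finite M \<and>
      (\<forall>t. f t = (\<Sum>\<alpha>\<in>M. a \<alpha> * (\<Prod>i\<in>UNIV. (t $ i) ^ (\<alpha> i)))))"

definition hausdorff_null :: "nat \<Rightarrow> 'a::metric_space set \<Rightarrow> bool" where
  "hausdorff_null d S \<longleftrightarrow> (\<forall>e>0. \<exists>C :: nat \<Rightarrow> 'a set.
      S \<subseteq> (\<Union>i. C i) \<and> (\<forall>i. bounded (C i)) \<and>
      summable (\<lambda>i. diameter (C i) ^ d) \<and> (\<Sum>i. diameter (C i) ^ d) < e)"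

end

theory Submission
  imports Defs "HOL-Library.Cardinality"
begin

text \<open>Fix a point \<open>s\<^sub>0\<close> of the quadric \<open>S\<close>. The line through \<open>s\<^sub>0\<close> in a direction \<open>v\<close> with
  \<open>v\<^sup>TAv \<noteq> 0\<close> meets \<open>S\<close> in exactly one further point, a rational function of \<open>v\<close> that is
  homogeneous of degree 0. Since \<open>S\<close> contains no line, every \<open>s \<in> S - {s\<^sub>0}\<close> is reached in this way
  from the direction \<open>s - s\<^sub>0\<close>. Composing with the polynomial map \<open>t \<mapsto> (|t|\<^sup>2 - 1, 2t)\<close>, which
  meets every line through the origin of \<open>\<real>\<^sup>n\<close>, parametrises \<open>S\<close> up to the single point \<open>s\<^sub>0\<close>.
  The rank statement is the same no-line argument: a nonzero \<open>v\<close> with \<open>Av = 0\<close> and \<open>b\<^sup>Tv = 0\<close>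
  would give \<open>s\<^sub>0 + \<real>v \<subseteq> S\<close>.\<close>

lemma inner_matrix_vector_symmetric:
  fixes A :: "real^'n^'n"
  assumes "transpose A = A"
  shows "x \<bullet> (A *v y) = y \<bullet> (A *v x)"
  by (metis assms dot_lmul_matrix inner_commute transpose_transpose vector_transpose_matrix)

lemma add_scaleR_mem_quadric_iff:
  fixes A :: "real^'n^'n"
  assumes "transpose A = A" and "x \<in> quadric A b c"
  shows "x + t *\<^sub>R v \<in> quadric A b c \<longleftrightarrow>
    t * ((A *v x + b) \<bullet> v) + t\<^sup>2 / 2 * (v \<bullet> (A *v v)) = 0"
proof -
  have "A *v (x + t *\<^sub>R v) = A *v x + t *\<^sub>R (A *v v)"
    by (simp add: matrix_vector_right_distrib matrix_vector_mult_scaleR)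
  moreover have "x \<bullet> (A *v v) = v \<bullet> (A *v x)"
    using inner_matrix_vector_symmetric[OF assms(1)] .
  ultimately have "(1/2) * ((x + t *\<^sub>R v) \<bullet> (A *v (x + t *\<^sub>R v))) + b \<bullet> (x + t *\<^sub>R v) + c
      = ((1/2) * (x \<bullet> (A *v x)) + b \<bullet> x + c) + t * ((A *v x + b) \<bullet> v) + t\<^sup>2 / 2 * (v \<bullet> (A *v v))"
    by (simp add: inner_add_left inner_add_right algebra_simps power2_eq_square inner_commute)
  with assms(2) show ?thesis unfolding quadric_def by simp
qed

lemma contains_line_quadricI:
  fixes A :: "real^'n^'n"
  assumes "transpose A = A" and "x \<in> quadric A b c" and "v \<noteq> 0"
    and "(A *v x + b) \<bullet> v = 0" and "v \<bullet> (A *v v) = 0"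
  shows "contains_line (quadric A b c)"
  unfolding contains_line_def
  using assms add_scaleR_mem_quadric_iff[OF assms(1,2)] by (intro exI[of _ x] exI[of _ v]) auto

lemma quadric_chord_anisotropic:
  fixes A :: "real^'n^'n"
  assumes "transpose A = A" and "\<not> contains_line (quadric A b c)"
    and "x \<in> quadric A b c" and "y \<in> quadric A b c" and "x \<noteq> y"
  shows "(y - x) \<bullet> (A *v (y - x)) \<noteq> 0"
proof
  assume isotropic: "(y - x) \<bullet> (A *v (y - x)) = 0"
  have "x + 1 *\<^sub>R (y - x) \<in> quadric A b c" using assms(4) by simp
  then have "(A *v x + b) \<bullet> (y - x) = 0"
    using isotropic add_scaleR_mem_quadric_iff[OF assms(1,3), of 1 "y - x"] by simp
  then show False
    using contains_line_quadricI[OF assms(1,3)] isotropic assms(2,5) by force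
qed

text \<open>If \<open>v\<^sup>TAv = 0\<close> the division yields 0 and the point is \<open>x\<close> itself, which still lies on the quadric.\<close>

definition second_intersection :: "real^'n^'n \<Rightarrow> real^'n \<Rightarrow> real^'n \<Rightarrow> real^'n \<Rightarrow> real^'n" where
  "second_intersection A b x v = x + (- 2 * ((A *v x + b) \<bullet> v) / (v \<bullet> (A *v v))) *\<^sub>R v"

lemma second_intersection_mem_quadric:
  fixes A :: "real^'n^'n"
  assumes "transpose A = A" and "x \<in> quadric A b c"
  shows "second_intersection A b x v \<in> quadric A b c"
  unfolding second_intersection_def add_scaleR_mem_quadric_iff[OF assms]
  by (cases "v \<bullet> (A *v v) = 0") (simp_all add: field_simps power2_eq_square)

lemma second_intersection_scaleR:
  fixes A :: "real^'n^'n"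
  assumes "\<mu> \<noteq> 0"
  shows "second_intersection A b x (\<mu> *\<^sub>R v) = second_intersection A b x v"
  using assms
  by (cases "v \<bullet> (A *v v) = 0")
    (simp_all add: second_intersection_def matrix_vector_mult_scaleR field_simps power2_eq_square)

lemma second_intersection_rational:
  fixes A :: "real^'n^'n"
  assumes "v \<bullet> (A *v v) \<noteq> 0"
  shows "second_intersection A b x v =
    (\<chi> k. (x $ k * (v \<bullet> (A *v v)) - 2 * ((A *v x + b) \<bullet> v) * v $ k) / (v \<bullet> (A *v v)))"
  using assms by (simp add: second_intersection_def vec_eq_iff field_simps)

lemma second_intersection_chord:
  fixes A :: "real^'n^'n"
  assumes "transpose A = A" and "x \<in> quadric A b c" and "y \<in> quadric A b c"
    and "(y - x) \<bullet> (A *v (y - x)) \<noteq> 0"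
  shows "second_intersection A b x (y - x) = y"
proof -
  have "x + 1 *\<^sub>R (y - x) \<in> quadric A b c" using assms(3) by simp
  then have "(A *v x + b) \<bullet> (y - x) = - ((y - x) \<bullet> (A *v (y - x))) / 2"
    using add_scaleR_mem_quadric_iff[OF assms(1,2), of 1 "y - x"] by simp
  then show ?thesis using assms(4) by (simp add: second_intersection_def)
qed

lemma rank_augment_eq_rows:
  fixes A :: "real^'n^'m" and b :: "real^'m"
  assumes "\<And>v. transpose A *v v = 0 \<Longrightarrow> b \<bullet> v = 0 \<Longrightarrow> v = 0"
  shows "rank (augment A b) = CARD('m)"
proof -
  have "transpose (augment A b) *v v = 0 \<Longrightarrow> v = 0" for v
  proof -
    assume kernel: "transpose (augment A b) *v v = 0"
    have "transpose A *v v = 0"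
    proof (rule vec_eq_iff[THEN iffD2], rule allI)
      fix k
      have "(transpose (augment A b) *v v) $ Some k = 0" using kernel by simp
      then show "(transpose A *v v) $ k = 0 $ k"
        by (simp add: matrix_vector_mult_def transpose_def augment_def)
    qed
    moreover have "b \<bullet> v = 0"
    proof -
      have "(transpose (augment A b) *v v) $ None = 0" using kernel by simp
      then show ?thesis by (simp add: matrix_vector_mult_def transpose_def augment_def inner_vec_def)
    qed
    ultimately show "v = 0" using assms by blast
  qed
  then have "inj ((*v) (transpose (augment A b)))"
    by (simp add: linear_inj_iff_eq_0)
  then show ?thesis by (metis full_rank_injective rank_transpose)
qed

lemma rank_augment_line_free_quadric:
  fixes A :: "real^'n^'n"
  assumes symm: "transpose A = A" and noline: "\<not> contains_line (quadric A b c)"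
    and x: "x \<in> quadric A b c"
  shows "rank (augment A b) = CARD('n)"
proof (rule rank_augment_eq_rows)
  fix v :: "real^'n"
  assume "transpose A *v v = 0" and "b \<bullet> v = 0"
  moreover have "(A *v x) \<bullet> v = x \<bullet> (A *v v)"
    using inner_matrix_vector_symmetric[OF symm, of v x] by (simp add: inner_commute)
  ultimately have "(A *v x + b) \<bullet> v = 0" and "v \<bullet> (A *v v) = 0"
    using symm by (simp_all add: inner_add_left)
  then show "v = 0" using contains_line_quadricI[OF symm x] noline by blast
qed

lemma sum_reindex_bij_option:
  fixes e :: "'m::finite option \<Rightarrow> 'n::finite"
  assumes "bij e"
  shows "(\<Sum>i\<in>UNIV. f i) = f (e None) + (\<Sum>j\<in>UNIV. f (e (Some j)))"
proof -
  have "(\<Sum>i\<in>UNIV. f i) = (\<Sum>z\<in>UNIV. f (e z))"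
    using sum.reindex_bij_betw[of e UNIV UNIV f] assms by (simp add: bij_betw_def)
  also have "\<dots> = f (e None) + (\<Sum>z\<in>range Some. f (e z))"
    by (subst UNIV_option_conv) simp
  also have "(\<Sum>z\<in>range Some. f (e z)) = (\<Sum>j\<in>UNIV. f (e (Some j)))"
    by (subst sum.reindex) (auto simp: inj_on_def)
  finally show ?thesis .
qed

text \<open>Up to the factor \<open>1 / (|t|\<^sup>2 + 1)\<close> this is inverse stereographic projection from \<open>\<real>\<^sup>m\<close> onto the
  unit sphere of \<open>\<real>\<^sup>m\<^sup>+\<^sup>1\<close>, with the pole on the axis \<open>e None\<close>.\<close>

definition stereographic_direction :: "('m option \<Rightarrow> 'n) \<Rightarrow> real^'m \<Rightarrow> real^'n" where
  "stereographic_direction e t =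
    (\<chi> i. case inv e i of None \<Rightarrow> (norm t)\<^sup>2 - 1 | Some j \<Rightarrow> 2 * t $ j)"

lemma stereographic_direction_apply:
  assumes "bij e"
  shows "stereographic_direction e t $ e z = (case z of None \<Rightarrow> (norm t)\<^sup>2 - 1 | Some j \<Rightarrow> 2 * t $ j)"
  by (simp add: stereographic_direction_def bij_is_inj[OF assms])

lemma stereographic_direction_off_pole:
  fixes e :: "'m::finite option \<Rightarrow> 'n::finite" and w :: "real^'n"
  assumes "bij e" and "w $ e None \<noteq> norm w"
  defines "d \<equiv> norm w - w $ e None"
  shows "stereographic_direction e (\<chi> j. w $ e (Some j) / d) = (2 / d) *\<^sub>R w"
proof -
  have "d \<noteq> 0" using assms(2) by (simp add: d_def)
  define rest where "rest = (\<Sum>j\<in>UNIV. (w $ e (Some j))\<^sup>2)"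
  have "(norm w)\<^sup>2 = (\<Sum>i\<in>UNIV. (w $ i)\<^sup>2)"
    unfolding power2_norm_eq_inner inner_vec_def by (simp add: power2_eq_square)
  also have "\<dots> = (w $ e None)\<^sup>2 + rest"
    unfolding rest_def by (rule sum_reindex_bij_option[OF assms(1)])
  finally have rest: "rest = d * (norm w + w $ e None)"
    by (simp add: d_def algebra_simps power2_eq_square)
  have "(norm (\<chi> j. w $ e (Some j) / d))\<^sup>2 = rest / d\<^sup>2"
    unfolding power2_norm_eq_inner inner_vec_def rest_def
    by (simp add: power2_eq_square sum_divide_distrib)
  also have "\<dots> = (norm w + w $ e None) / d"
    using \<open>d \<noteq> 0\<close> by (simp add: rest power2_eq_square)
  also have "\<dots> = 1 + 2 / d * w $ e None"
    using \<open>d \<noteq> 0\<close> by (simp add: d_def field_simps)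
  finally have "(norm (\<chi> j. w $ e (Some j) / d))\<^sup>2 - 1 = 2 / d * w $ e None"
    by simp
  then have "stereographic_direction e (\<chi> j. w $ e (Some j) / d) $ e z = ((2 / d) *\<^sub>R w) $ e z" for z
    by (simp add: stereographic_direction_apply[OF assms(1)] split: option.split)
  then show ?thesis
    by (metis vec_eq_iff bij_pointE[OF assms(1)])
qed

lemma stereographic_direction_meets_lines:
  fixes e :: "'m::finite option \<Rightarrow> 'n::finite" and w :: "real^'n"
  assumes "bij e" and "w \<noteq> 0"
  obtains t \<mu> where "\<mu> \<noteq> 0" and "stereographic_direction e t = \<mu> *\<^sub>R w"
proof (cases "w $ e None = norm w")
  case False
  show ?thesis
    by (rule that[OF _ stereographic_direction_off_pole[OF assms(1) False]]) (use False in simp)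
next
  case True
  then have off_pole: "(- w) $ e None \<noteq> norm (- w)" using assms(2) by simp
  have "stereographic_direction e (\<chi> j. (- w) $ e (Some j) / (norm (- w) - (- w) $ e None))
      = (- (2 / (norm (- w) - (- w) $ e None))) *\<^sub>R w"
    using stereographic_direction_off_pole[OF assms(1) off_pole] by simp
  then show ?thesis by (rule that[rotated]) (use True assms(2) in simp)
qed

lemma line_free_quadric_minus_point_subset:
  fixes A :: "real^'n^'n" and e :: "'m::finite option \<Rightarrow> 'n"
  assumes symm: "transpose A = A" and noline: "\<not> contains_line (quadric A b c)"
    and x: "x \<in> quadric A b c" and e: "bij e"
  defines "V \<equiv> stereographic_direction e"
  shows "quadric A b c - {x} \<subseteq>
    (\<lambda>t. second_intersection A b x (V t)) ` {t. V t \<bullet> (A *v V t) \<noteq> 0}"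
proof
  fix s assume s: "s \<in> quadric A b c - {x}"
  then have chord: "(s - x) \<bullet> (A *v (s - x)) \<noteq> 0"
    using quadric_chord_anisotropic[OF symm noline x] by auto
  have "s - x \<noteq> 0" using s by simp
  then obtain t \<mu> where "\<mu> \<noteq> 0" and "V t = \<mu> *\<^sub>R (s - x)"
    unfolding V_def by (rule stereographic_direction_meets_lines[OF e])
  then have "V t \<bullet> (A *v V t) \<noteq> 0" and "second_intersection A b x (V t) = s"
    using chord second_intersection_chord[OF symm x _ chord] s
    by (auto simp: matrix_vector_mult_scaleR second_intersection_scaleR)
  then show "s \<in> (\<lambda>t. second_intersection A b x (V t)) ` {t. V t \<bullet> (A *v V t) \<noteq> 0}"
    by blast
qed

lemma poly_fun_const: "poly_fun (\<lambda>t. k)"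
  unfolding poly_fun_def
  by (rule exI[of _ "{\<lambda>_. 0}"], rule exI[of _ "\<lambda>_. k"]) simp

lemma poly_fun_component: "poly_fun (\<lambda>t. t $ i)"
  unfolding poly_fun_def
proof (rule exI[of _ "{\<lambda>j. if j = i then 1 else 0}"], rule exI[of _ "\<lambda>_. 1"], safe)
  fix t :: "real^'a"
  have "(\<Prod>j\<in>UNIV. (t $ j) ^ (if j = i then 1 else 0)) = (\<Prod>j\<in>UNIV. if j = i then t $ j else 1)"
    by (rule prod.cong) auto
  then show "t $ i = (\<Sum>\<alpha>\<in>{\<lambda>j. if j = i then 1 else 0}. 1 * (\<Prod>j\<in>UNIV. (t $ j) ^ \<alpha> j))"
    by simp
qed

lemma poly_fun_add:
  assumes "poly_fun f" and "poly_fun g"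
  shows "poly_fun (\<lambda>t. f t + g t)"
proof -
  obtain M1 a1 where 1: "finite M1" "\<And>t. f t = (\<Sum>\<alpha>\<in>M1. a1 \<alpha> * (\<Prod>i\<in>UNIV. (t $ i) ^ (\<alpha> i)))"
    using assms(1) unfolding poly_fun_def by blast
  obtain M2 a2 where 2: "finite M2" "\<And>t. g t = (\<Sum>\<alpha>\<in>M2. a2 \<alpha> * (\<Prod>i\<in>UNIV. (t $ i) ^ (\<alpha> i)))"
    using assms(2) unfolding poly_fun_def by blast
  let ?a = "\<lambda>\<alpha>. (if \<alpha> \<in> M1 then a1 \<alpha> else 0) + (if \<alpha> \<in> M2 then a2 \<alpha> else 0)"
  show ?thesis unfolding poly_fun_def
  proof (rule exI[of _ "M1 \<union> M2"], rule exI[of _ ?a], intro conjI allI)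
    show "finite (M1 \<union> M2)" using 1 2 by simp
    fix t :: "real^'a"
    let ?m = "\<lambda>\<alpha>. (\<Prod>i\<in>UNIV. (t $ i) ^ (\<alpha> i))"
    have "(\<Sum>\<alpha>\<in>M1. a1 \<alpha> * ?m \<alpha>) = (\<Sum>\<alpha>\<in>M1 \<union> M2. (if \<alpha> \<in> M1 then a1 \<alpha> else 0) * ?m \<alpha>)"
      and "(\<Sum>\<alpha>\<in>M2. a2 \<alpha> * ?m \<alpha>) = (\<Sum>\<alpha>\<in>M1 \<union> M2. (if \<alpha> \<in> M2 then a2 \<alpha> else 0) * ?m \<alpha>)"
      by (rule sum.mono_neutral_cong_left; use 1 2 in auto)+
    then show "f t + g t = (\<Sum>\<alpha>\<in>M1 \<union> M2. ?a \<alpha> * ?m \<alpha>)"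
      unfolding 1(2) 2(2) by (simp add: sum.distrib[symmetric] algebra_simps)
  qed
qed

lemma poly_fun_mult:
  assumes "poly_fun f" and "poly_fun g"
  shows "poly_fun (\<lambda>t. f t * g t)"
proof -
  obtain M1 a1 where 1: "finite M1" "\<And>t. f t = (\<Sum>\<alpha>\<in>M1. a1 \<alpha> * (\<Prod>i\<in>UNIV. (t $ i) ^ (\<alpha> i)))"
    using assms(1) unfolding poly_fun_def by blast
  obtain M2 a2 where 2: "finite M2" "\<And>t. g t = (\<Sum>\<alpha>\<in>M2. a2 \<alpha> * (\<Prod>i\<in>UNIV. (t $ i) ^ (\<alpha> i)))"
    using assms(2) unfolding poly_fun_def by blast
  let ?h = "\<lambda>p::('a \<Rightarrow> nat) \<times> ('a \<Rightarrow> nat). (\<lambda>i. fst p i + snd p i)"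
  let ?M = "?h ` (M1 \<times> M2)"
  let ?a = "\<lambda>\<gamma>. \<Sum>p\<in>{p \<in> M1 \<times> M2. ?h p = \<gamma>}. a1 (fst p) * a2 (snd p)"
  show ?thesis unfolding poly_fun_def
  proof (rule exI[of _ ?M], rule exI[of _ ?a], intro conjI allI)
    show "finite ?M" using 1 2 by simp
    fix t :: "real^'a"
    let ?m = "\<lambda>\<alpha>. (\<Prod>i\<in>UNIV. (t $ i) ^ (\<alpha> i))"
    have monomial_mult: "?m (\<lambda>i. \<alpha> i + \<beta> i) = ?m \<alpha> * ?m \<beta>" for \<alpha> \<beta>
      by (simp add: power_add prod.distrib)
    have "f t * g t = (\<Sum>p\<in>M1 \<times> M2. a1 (fst p) * a2 (snd p) * ?m (?h p))"
      unfolding 1(2) 2(2) sum_product sum.cartesian_product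
      by (rule sum.cong) (auto simp: monomial_mult algebra_simps)
    also have "\<dots> = (\<Sum>\<gamma>\<in>?M. \<Sum>p\<in>{p \<in> M1 \<times> M2. ?h p = \<gamma>}. a1 (fst p) * a2 (snd p) * ?m (?h p))"
      by (rule sum.group[symmetric]) (use 1 2 in auto)
    also have "\<dots> = (\<Sum>\<gamma>\<in>?M. \<Sum>p\<in>{p \<in> M1 \<times> M2. ?h p = \<gamma>}. a1 (fst p) * a2 (snd p) * ?m \<gamma>)"
      by (intro sum.cong refl) (auto simp del: mult_eq_0_iff)
    also have "\<dots> = (\<Sum>\<gamma>\<in>?M. ?a \<gamma> * ?m \<gamma>)"
      by (simp add: sum_distrib_right)
    finally show "f t * g t = (\<Sum>\<gamma>\<in>?M. ?a \<gamma> * ?m \<gamma>)" .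
  qed
qed

lemma poly_fun_diff:
  assumes "poly_fun f" and "poly_fun g"
  shows "poly_fun (\<lambda>t. f t - g t)"
  using poly_fun_add[OF assms(1) poly_fun_mult[OF poly_fun_const[of "- 1"] assms(2)]] by simp

lemma poly_fun_sum:
  assumes "finite I" and "\<And>i. i \<in> I \<Longrightarrow> poly_fun (f i)"
  shows "poly_fun (\<lambda>t. \<Sum>i\<in>I. f i t)"
  using assms
proof (induction I rule: finite_induct)
  case empty
  then show ?case using poly_fun_const[of 0] by simp
next
  case (insert x F)
  then show ?case by (simp add: poly_fun_add)
qed

lemma poly_fun_inner:
  assumes "\<And>i. poly_fun (\<lambda>t. f t $ i)" and "\<And>i. poly_fun (\<lambda>t. g t $ i)"
  shows "poly_fun (\<lambda>t. f t \<bullet> g t)"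
  unfolding inner_vec_def inner_real_def
  by (intro poly_fun_sum poly_fun_mult assms finite)

lemma poly_fun_matrix_vector_mult:
  assumes "\<And>j. poly_fun (\<lambda>t. f t $ j)"
  shows "poly_fun (\<lambda>t. (A *v f t) $ i)"
  unfolding matrix_vector_mult_def vec_lambda_beta
  by (intro poly_fun_sum poly_fun_mult poly_fun_const assms finite)

lemma poly_fun_stereographic_direction: "poly_fun (\<lambda>t. stereographic_direction e t $ i)"
proof (cases "inv e i")
  case None
  then have "stereographic_direction e t $ i = (\<Sum>j\<in>UNIV. t $ j * t $ j) - 1" for t
    unfolding stereographic_direction_def power2_norm_eq_inner inner_vec_def by simp
  then show ?thesis
    by (simp add: poly_fun_diff poly_fun_sum poly_fun_mult poly_fun_component poly_fun_const)
next
  case (Some j)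
  then show ?thesis
    by (simp add: stereographic_direction_def poly_fun_mult poly_fun_component poly_fun_const)
qed

lemma hausdorff_null_subset_singleton:
  assumes "T \<subseteq> {a}" and "d > 0"
  shows "hausdorff_null d T"
  unfolding hausdorff_null_def
  using assms by (auto intro!: exI[of _ "\<lambda>_. {a}"] simp: zero_power)

theorem lemma3:
  fixes A :: "real^'n^'n" and b :: "real^'n" and c :: real
  assumes dims: "CARD('n) = CARD('m) + 1"
    and symm: "transpose A = A"
    and nonzero: "A \<noteq> 0"
    and noline: "\<not> contains_line (quadric A b c)"
    and two_pts: "\<exists>x\<in>quadric A b c. \<exists>y\<in>quadric A b c. x \<noteq> y"
  shows "rank (augment A b) = CARD('n) \<and>
    (\<exists>(p :: 'n \<Rightarrow> real^'m \<Rightarrow> real) (q :: 'n \<Rightarrow> real^'m \<Rightarrow> real) (D :: (real^'m) set).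
       (\<forall>k. poly_fun (p k) \<and> poly_fun (q k)) \<and>
       (\<forall>t\<in>D. \<forall>k. q k t \<noteq> 0) \<and>
       (\<lambda>t. \<chi> k. p k t / q k t) ` D \<subseteq> quadric A b c \<and>
       hausdorff_null CARD('m) (quadric A b c - (\<lambda>t. \<chi> k. p k t / q k t) ` D))"
proof -
  obtain s0 where s0: "s0 \<in> quadric A b c" using two_pts by blast
  obtain e :: "'m option \<Rightarrow> 'n" where e: "bij e"
    using dims bij_betw_iff_card[of "UNIV :: 'm option set" "UNIV :: 'n set"] by auto
  define V where "V = stereographic_direction e"
  define q where "q t = V t \<bullet> (A *v V t)" for t
  define p where "p k t = s0 $ k * q t - 2 * ((A *v s0 + b) \<bullet> V t) * V t $ k" for k t
  define D where "D = {t. q t \<noteq> 0}"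
  have V_poly: "poly_fun (\<lambda>t. V t $ i)" for i
    unfolding V_def by (rule poly_fun_stereographic_direction)
  have q_poly: "poly_fun q"
    unfolding q_def by (intro poly_fun_inner poly_fun_matrix_vector_mult V_poly)
  have p_poly: "poly_fun (p k)" for k
    unfolding p_def by (intro poly_fun_diff poly_fun_mult poly_fun_const poly_fun_inner q_poly V_poly)
  have param: "(\<lambda>t. \<chi> k. p k t / q t) ` D = (\<lambda>t. second_intersection A b s0 (V t)) ` D"
    by (intro image_cong refl) (simp add: D_def p_def q_def second_intersection_rational)
  have cover: "quadric A b c - {s0} \<subseteq> (\<lambda>t. second_intersection A b s0 (V t)) ` D"
    unfolding D_def q_def V_def by (rule line_free_quadric_minus_point_subset[OF symm noline s0 e])
  have "(\<lambda>t. \<chi> k. p k t / q t) ` D \<subseteq> quadric A b c"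
    unfolding param using second_intersection_mem_quadric[OF symm s0] by blast
  moreover have "hausdorff_null CARD('m) (quadric A b c - (\<lambda>t. \<chi> k. p k t / q t) ` D)"
    unfolding param using cover by (intro hausdorff_null_subset_singleton[of _ s0]) auto
  ultimately show ?thesis
    using rank_augment_line_free_quadric[OF symm noline s0] p_poly q_poly
    by (intro conjI exI[of _ p] exI[of _ "\<lambda>_. q"] exI[of _ D]) (auto simp: D_def)
qed

end
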